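(* Let $G$ be a graph with an assignment $L$ of lists of colours to its edges, and let $v_1v_2$ and $w_1w_2$ be two edges of $G$ that share no endpoint. Suppose $$|L(v_1v_2)|\,|L(w_1w_2)| \;>\; \sum_{\substack{i,j\in\{1,2\}\\ v_iw_j\in E(G)}} \left\lfloor \frac{|L(v_iw_j)|}{2}\right\rfloor \left\lceil \frac{|L(v_iw_j)|}{2}\right\rceil .$$ Then there exist colours $c_1\in L(v_1v_2)$ and $c_2\in L(w_1w_2)$ that are compatible.
   Context: For edges $e,f$ of $G$ and colours $c_1\in L(e)$, $c_2\in L(f)$, the colours $c_1,c_2$ are called compatible if $c_1=c_2$, or if for every edge $g$ that is adjacent to (shares an endpoint with) both $e$ and $f$, the list $L(g)$ contains at most one of $c_1$ and $c_2$. *)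

theory Defs
  imports Complex_Main
begin

definition simple_graph :: "'a set set \<Rightarrow> bool" where
  "simple_graph E \<longleftrightarrow> (\<forall>e\<in>E. \<exists>x y. x \<noteq> y \<and> e = {x, y})"

definition edges_adjacent :: "'a set \<Rightarrow> 'a set \<Rightarrow> bool" where
  "edges_adjacent g e \<longleftrightarrow> g \<noteq> e \<and> g \<inter> e \<noteq> {}"

definition compatible :: "'a set set \<Rightarrow> ('a set \<Rightarrow> 'c set) \<Rightarrow> 'a set \<Rightarrow> 'a set \<Rightarrow> 'c \<Rightarrow> 'c \<Rightarrow> bool" where
  "compatible E L e f c1 c2 \<longleftrightarrow>
     c1 \<in> L e \<and> c2 \<in> L f \<and>
     (c1 = c2 \<or> (\<forall>g\<in>E. edges_adjacent g e \<and> edges_adjacent g f \<longrightarrow> \<not> (c1 \<in> L g \<and> c2 \<in> L g)))"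

end

theory Submission
  imports Defs
begin

text \<open>If no pair were compatible, the two lists would be disjoint and every pair
  \<open>(c\<^sub>1, c\<^sub>2) \<in> L(v\<^sub>1v\<^sub>2) \<times> L(w\<^sub>1w\<^sub>2)\<close> would appear together in the list of some edge
  \<open>v\<^sub>iw\<^sub>j\<close>. The pairs covered by such an edge with list \<open>G\<close> form
  \<open>(L(v\<^sub>1v\<^sub>2) \<inter> G) \<times> (L(w\<^sub>1w\<^sub>2) \<inter> G)\<close>, a product of two disjoint subsets of \<open>G\<close>, so
  there are at most \<open>\<lfloor>|G|/2\<rfloor>\<lceil>|G|/2\<rceil>\<close> of them. Summing over the edges \<open>v\<^sub>iw\<^sub>j\<close>
  contradicts the hypothesis.\<close>

lemma floor_half_of_nat: "\<lfloor>real n / 2\<rfloor> = int (n div 2)"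
  by (metis floor_divide_of_nat_eq of_nat_numeral)

lemma ceiling_half_of_nat: "\<lceil>real n / 2\<rceil> = int (n - n div 2)"
proof (cases "even n")
  case True
  then show ?thesis by auto
next
  case False
  then obtain m where "n = 2 * m + 1" using oddE by blast
  then show ?thesis by (simp add: ceiling_eq_iff)
qed

lemma mult_le_half_times_half:
  fixes a b n :: nat
  assumes "a + b \<le> n"
  shows "int a * int b \<le> int (n div 2) * int (n - n div 2)"
proof -
  define k where "k = int (n div 2)"
  have upper_half: "int (n - n div 2) = int n - k" unfolding k_def by simp
  have balanced: "int n - k = k \<or> int n - k = k + 1" unfolding k_def by presburger
  have "int a * int b \<le> int a * (int n - int a)"
    using assms by (intro mult_left_mono) auto
  also have "\<dots> \<le> k * (int n - k)"
  proof -
    have "(k - int a) * (int n - k - int a) \<ge> 0"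
    proof (cases "int a \<le> k")
      case True
      then show ?thesis using balanced by (intro mult_nonneg_nonneg) auto
    next
      case False
      then show ?thesis using balanced by (intro mult_nonpos_nonpos) auto
    qed
    then show ?thesis by (simp add: algebra_simps)
  qed
  finally show ?thesis using upper_half by simp
qed

lemma card_Int_mult_card_Int_le_floor_ceiling:
  assumes "finite G" and "A \<inter> B = {}"
  shows "real (card (A \<inter> G) * card (B \<inter> G))
           \<le> real_of_int (\<lfloor>real (card G) / 2\<rfloor> * \<lceil>real (card G) / 2\<rceil>)"
proof -
  have "card (A \<inter> G) + card (B \<inter> G) = card ((A \<inter> G) \<union> (B \<inter> G))"
    using assms by (intro card_Un_disjoint[symmetric]) auto
  also have "\<dots> \<le> card G"
    using assms(1) by (intro card_mono) auto
  finally have "int (card (A \<inter> G)) * int (card (B \<inter> G))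
                  \<le> int (card G div 2) * int (card G - card G div 2)"
    by (rule mult_le_half_times_half)
  then show ?thesis
    unfolding floor_half_of_nat ceiling_half_of_nat
    by (metis of_int_le_iff of_int_of_nat_eq of_nat_mult)
qed

lemma edge_adjacent_to_disjoint_edges:
  assumes "simple_graph E" and "g \<in> E"
    and "edges_adjacent g e" and "edges_adjacent g f" and "e \<inter> f = {}"
  obtains x y where "x \<in> e" and "y \<in> f" and "g = {x, y}"
proof -
  obtain a b where "a \<noteq> b" and "g = {a, b}"
    using assms(1,2) unfolding simple_graph_def by blast
  with assms(3-5) that show thesis
    unfolding edges_adjacent_def by blast
qed

lemma incompatible_lists_covered_by_connecting_edges:
  assumes "simple_graph E" and "e \<inter> f = {}"
    and "\<And>c1 c2. \<not> compatible E L e f c1 c2"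
  shows "L e \<times> L f \<subseteq>
    (\<Union>(x, y)\<in>{(x, y). x \<in> e \<and> y \<in> f \<and> {x, y} \<in> E}. (L e \<inter> L {x, y}) \<times> (L f \<inter> L {x, y}))"
proof clarify
  fix c1 c2 assume "c1 \<in> L e" and "c2 \<in> L f"
  moreover have "c1 \<noteq> c2"
    using assms(3)[of c1 c1] \<open>c1 \<in> L e\<close> \<open>c2 \<in> L f\<close> unfolding compatible_def by auto
  ultimately obtain g where "g \<in> E"
    and "edges_adjacent g e" and "edges_adjacent g f" and "c1 \<in> L g" and "c2 \<in> L g"
    using assms(3)[of c1 c2] unfolding compatible_def by blast
  moreover from this obtain x y where "x \<in> e" and "y \<in> f" and "g = {x, y}"
    using edge_adjacent_to_disjoint_edges[OF assms(1)] assms(2) by blast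
  ultimately show "(c1, c2) \<in> (\<Union>(x, y)\<in>{(x, y). x \<in> e \<and> y \<in> f \<and> {x, y} \<in> E}.
      (L e \<inter> L {x, y}) \<times> (L f \<inter> L {x, y}))"
    using \<open>c1 \<in> L e\<close> \<open>c2 \<in> L f\<close> by blast
qed

lemma card_mult_le_sum_of_covering_products:
  assumes "finite P" and "finite A" and "finite B"
    and "A \<times> B \<subseteq> (\<Union>p\<in>P. (A \<inter> G p) \<times> (B \<inter> G p))"
  shows "real (card A * card B) \<le> (\<Sum>p\<in>P. real (card (A \<inter> G p) * card (B \<inter> G p)))"
proof -
  have "card (A \<times> B) \<le> card (\<Union>p\<in>P. (A \<inter> G p) \<times> (B \<inter> G p))"
    using assms by (intro card_mono) auto
  also have "\<dots> \<le> (\<Sum>p\<in>P. card ((A \<inter> G p) \<times> (B \<inter> G p)))"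
    using assms(1) by (rule card_UN_le)
  finally show ?thesis
    by (simp add: card_cartesian_product flip: of_nat_sum of_nat_mult)
qed

theorem lemma9:
  fixes E :: "'a set set" and L :: "'a set \<Rightarrow> 'c set" and v1 v2 w1 w2 :: 'a
  assumes "simple_graph E"
    and "\<And>e. e \<in> E \<Longrightarrow> finite (L e)"
    and "{v1, v2} \<in> E" and "{w1, w2} \<in> E"
    and "{v1, v2} \<inter> {w1, w2} = {}"
    and "real (card (L {v1, v2}) * card (L {w1, w2})) >
         (\<Sum>(x, y) \<in> {(x, y). x \<in> {v1, v2} \<and> y \<in> {w1, w2} \<and> {x, y} \<in> E}.
            real_of_int (\<lfloor>real (card (L {x, y})) / 2\<rfloor> * \<lceil>real (card (L {x, y})) / 2\<rceil>))"
  shows "\<exists>c1 c2. c1 \<in> L {v1, v2} \<and> c2 \<in> L {w1, w2} \<and> compatible E L {v1, v2} {w1, w2} c1 c2"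
proof (rule ccontr)
  assume "\<not> ?thesis"
  then have incompatible: "\<And>c1 c2. \<not> compatible E L {v1, v2} {w1, w2} c1 c2"
    unfolding compatible_def by blast
  define A where "A = L {v1, v2}"
  define B where "B = L {w1, w2}"
  define P where "P = {(x, y). x \<in> {v1, v2} \<and> y \<in> {w1, w2} \<and> {x, y} \<in> E}"
  have "finite A" and "finite B" using assms(2-4) unfolding A_def B_def by auto
  have "finite P" by (rule finite_subset[of _ "{v1, v2} \<times> {w1, w2}"]) (auto simp: P_def)
  have disjoint: "A \<inter> B = {}"
    using incompatible unfolding A_def B_def compatible_def by blast
  have "A \<times> B \<subseteq> (\<Union>(x, y)\<in>P. (A \<inter> L {x, y}) \<times> (B \<inter> L {x, y}))"
    using incompatible_lists_covered_by_connecting_edges[OF assms(1,5) incompatible]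
    unfolding A_def B_def P_def .
  then have "real (card A * card B)
      \<le> (\<Sum>(x, y)\<in>P. real (card (A \<inter> L {x, y}) * card (B \<inter> L {x, y})))"
    using card_mult_le_sum_of_covering_products[of P A B "\<lambda>(x, y). L {x, y}"]
      \<open>finite P\<close> \<open>finite A\<close> \<open>finite B\<close>
    by (simp add: split_def)
  also have "\<dots> \<le> (\<Sum>(x, y)\<in>P.
      real_of_int (\<lfloor>real (card (L {x, y})) / 2\<rfloor> * \<lceil>real (card (L {x, y})) / 2\<rceil>))"
  proof (intro sum_mono, clarify)
    fix x y assume "(x, y) \<in> P"
    then have "finite (L {x, y})" using assms(2) unfolding P_def by auto
    then show "real (card (A \<inter> L {x, y}) * card (B \<inter> L {x, y}))
        \<le> real_of_int (\<lfloor>real (card (L {x, y})) / 2\<rfloor> * \<lceil>real (card (L {x, y})) / 2\<rceil>)"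
      using disjoint by (rule card_Int_mult_card_Int_le_floor_ceiling)
  qed
  finally show False using assms(6) unfolding A_def B_def P_def by linarith
qed

end
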